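(* Let $B(\mathbf f,\tilde{\mathbf f})=P(\mathbf f\cdot\nabla\tilde{\mathbf f}+\tilde{\mathbf f}\cdot\nabla\mathbf f)$ for smooth divergence-free mean-free fields on $\mathbf T^3$. Then: (i) for every $\mathbf k\in\mathbf Z^3\setminus\{0\}$, $B(\mathbf e,\tilde{\mathbf e})=0$ for all $\mathbf e,\tilde{\mathbf e}\in F_{\mathbf k}$; (ii) for all $\mathbf j,\mathbf k\in\mathbf Z^3\setminus\{0\}$, $\operatorname{span}\{B(\mathbf e,\tilde{\mathbf e}):\mathbf e\in F_{\mathbf j},\tilde{\mathbf e}\in F_{\mathbf k}\}\subseteq\operatorname{span}(F_{\mathbf j-\mathbf k}\cup F_{\mathbf j+\mathbf k})$, with equality whenever $\mathbf j,\mathbf k$ are linearly independent and $|\mathbf j|\ne|\mathbf k|$; (iii) $F_{(1,1,1)}\subseteq\operatorname{span}\{B(B(\mathbf e,\tilde{\mathbf e}),\tilde{\tilde{\mathbf e}}):\mathbf e,\tilde{\mathbf e},\tilde{\tilde{\mathbf e}}\in F_{(1,0,0)}\cup F_{(0,1,0)}\cup F_{(0,0,1)}\}$.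
   Context: $P$ is the Leray projection onto mean-free divergence-free vector fields on $\mathbf T^3$. For each $\mathbf k\in\mathbf Z^3\setminus\{0\}$ choose $\mathbf a^{(0)}_{\mathbf k},\mathbf a^{(1)}_{\mathbf k}\in\mathbb R^3$ with $\mathbf a^{(0)}_{\mathbf k}\cdot\mathbf k=\mathbf a^{(1)}_{\mathbf k}\cdot\mathbf k=\mathbf a^{(0)}_{\mathbf k}\cdot\mathbf a^{(1)}_{\mathbf k}=0$ and $|\mathbf a^{(0)}_{\mathbf k}|^2=|\mathbf a^{(1)}_{\mathbf k}|^2=1/(4\pi)$; set $\mathbf e_{\mathbf k,l,0}=2\mathbf a^{(l)}_{\mathbf k}\cos(\mathbf k\cdot x)$, $\mathbf e_{\mathbf k,l,1}=2\mathbf a^{(l)}_{\mathbf k}\sin(\mathbf k\cdot x)$ and $F_{\mathbf k}=\operatorname{span}\{\mathbf e_{\mathbf k,l,m}:l,m\in\{0,1\}\}$ (so $F_{\mathbf k}$ is the space of divergence-free fields $\mathbf A\cos(\mathbf k\cdot x)+\mathbf B\sin(\mathbf k\cdot x)$ with $\mathbf A,\mathbf B\perp\mathbf k$, and $F_{-\mathbf k}=F_{\mathbf k}$). By convention $F_{\mathbf 0}=\{0\}$. *)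

theory Defs
  imports "HOL-Analysis.Analysis"
begin

text \<open>Vector fields on the torus T^3 = R^3 / (2 pi Z)^3, represented as
  2pi-periodic maps R^3 -> R^3.\<close>

type_synonym vfield = "real^3 \<Rightarrow> real^3"

definition periodic_field :: "vfield \<Rightarrow> bool" where
  "periodic_field u \<longleftrightarrow> (\<forall>x i. u (x + (2 * pi) *\<^sub>R axis i 1) = u x)"

definition torus_cell :: "(real^3) set" where
  "torus_cell = cbox 0 (\<chi> i. 2 * pi)"

definition dir_deriv :: "vfield \<Rightarrow> vfield \<Rightarrow> vfield" where
  "dir_deriv a g = (\<lambda>x. frechet_derivative g (at x) (a x))"

definition divergence :: "vfield \<Rightarrow> real^3 \<Rightarrow> real" where
  "divergence u x = (\<Sum>i\<in>UNIV. frechet_derivative u (at x) (axis i 1) $ i)"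

definition solenoidal :: "vfield \<Rightarrow> bool" where
  "solenoidal v \<longleftrightarrow> periodic_field v
     \<and> (\<forall>x. v differentiable at x)
     \<and> (\<forall>i. continuous_on UNIV (\<lambda>x. frechet_derivative v (at x) (axis i 1)))
     \<and> (\<forall>x. divergence v x = 0)
     \<and> integral torus_cell v = 0"

definition leray :: "vfield \<Rightarrow> vfield" where
  "leray u = (THE v. solenoidal v \<and>
      (\<forall>w. solenoidal w \<longrightarrow> integral torus_cell (\<lambda>x. (u x - v x) \<bullet> w x) = 0))"

definition Bop :: "vfield \<Rightarrow> vfield \<Rightarrow> vfield" where
  "Bop f g = leray (\<lambda>x. dir_deriv f g x + dir_deriv g f x)"

definition kr :: "int^3 \<Rightarrow> real^3" where
  "kr k = (\<chi> i. real_of_int (k $ i))"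

definition Fk :: "int^3 \<Rightarrow> vfield set" where
  "Fk k = (if k = 0 then {\<lambda>x. 0} else
     {(\<lambda>x. cos (kr k \<bullet> x) *\<^sub>R A + sin (kr k \<bullet> x) *\<^sub>R B) | A B.
         A \<bullet> kr k = 0 \<and> B \<bullet> kr k = 0})"

definition fspan :: "vfield set \<Rightarrow> vfield set" where
  "fspan S = {(\<lambda>x. \<Sum>e\<in>T. c e *\<^sub>R e x) | T c. finite T \<and> T \<subseteq> S}"

end

theory Submission
  imports Defs "HOL-Analysis.Cross3"
begin

text \<open>Everything is computed on finite sums of modes \<open>cos(k\<cdot>x) A + sin(k\<cdot>x) B\<close>. By the
  product-to-sum formulas, \<open>f\<cdot>\<nabla>g + g\<cdot>\<nabla>f\<close> for modes with wave vectors \<open>j\<close> and \<open>k\<close> consists of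
  modes with wave vectors \<open>j + k\<close> and \<open>j - k\<close>. The Leray projection of such a sum projects
  each amplitude onto the plane orthogonal to its wave vector and drops the constant mode: the
  remainder is a sum of gradients and constants, hence \<open>L\<^sup>2\<close>-orthogonal to every mean-free
  divergence-free field by integration by parts on the torus. Then (i) is a cancellation of
  amplitudes and the inclusion in (ii) is immediate. For the equality in (ii), and for (iii)
  via the intermediate wave vector \<open>(1,1,0)\<close>, one exhibits two linearly independent
  amplitudes orthogonal to the target wave vector, each produced in a cosine and a sine mode by
  combinations of values of \<open>B\<close>.\<close>

section \<open>Trigonometric polynomials and their advection terms\<close>

definition mode :: "int^3 \<Rightarrow> real^3 \<Rightarrow> real^3 \<Rightarrow> vfield" where
  "mode k A B = (\<lambda>x. cos (kr k \<bullet> x) *\<^sub>R A + sin (kr k \<bullet> x) *\<^sub>R B)"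

definition mode_deriv :: "int^3 \<Rightarrow> real^3 \<Rightarrow> real^3 \<Rightarrow> real^3 \<Rightarrow> real^3 \<Rightarrow> real^3" where
  "mode_deriv k A B x h = (kr k \<bullet> h) *\<^sub>R (cos (kr k \<bullet> x) *\<^sub>R B - sin (kr k \<bullet> x) *\<^sub>R A)"

lemma has_derivative_mode: "(mode k A B has_derivative mode_deriv k A B x) (at x)"
  unfolding mode_def mode_deriv_def
  by (auto intro!: derivative_eq_intros simp: fun_eq_iff algebra_simps)

type_synonym wave = "(int^3) \<times> (real^3) \<times> (real^3)"

definition trig_poly :: "wave list \<Rightarrow> vfield" where
  "trig_poly L = (\<lambda>x. sum_list (map (\<lambda>(k, A, B). mode k A B x) L))"

definition trig_poly_deriv :: "wave list \<Rightarrow> real^3 \<Rightarrow> real^3 \<Rightarrow> real^3" where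
  "trig_poly_deriv L x h = sum_list (map (\<lambda>(k, A, B). mode_deriv k A B x h) L)"

lemma trig_poly_simps [simp]:
  "trig_poly [] x = 0"
  "trig_poly ((k, A, B) # L) x = mode k A B x + trig_poly L x"
  "trig_poly (L1 @ L2) x = trig_poly L1 x + trig_poly L2 x"
  by (simp_all add: trig_poly_def)

lemma trig_poly_deriv_simps [simp]:
  "trig_poly_deriv [] x h = 0"
  "trig_poly_deriv ((k, A, B) # L) x h = mode_deriv k A B x h + trig_poly_deriv L x h"
  by (simp_all add: trig_poly_deriv_def)

lemma trig_poly_single: "trig_poly [(k, A, B)] = mode k A B"
  by (simp add: fun_eq_iff)

lemma has_derivative_trig_poly: "(trig_poly L has_derivative trig_poly_deriv L x) (at x)"
proof (induction L)
  case Nil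
  show ?case by (simp add: trig_poly_def trig_poly_deriv_def[abs_def])
next
  case (Cons w L)
  obtain k A B where "w = (k, A, B)" by (cases w)
  with has_derivative_add[OF has_derivative_mode Cons.IH] show ?case
    by (simp add: fun_eq_iff trig_poly_def trig_poly_deriv_def)
qed

lemma frechet_derivative_trig_poly: "frechet_derivative (trig_poly L) (at x) = trig_poly_deriv L x"
  using has_derivative_trig_poly frechet_derivative_at by metis

lemma differentiable_trig_poly: "trig_poly L differentiable at x"
  using has_derivative_trig_poly differentiable_def by blast

lemma continuous_on_trig_poly: "continuous_on S (trig_poly L)"
  using differentiable_trig_poly
  by (meson differentiable_at_withinI differentiable_imp_continuous_on differentiable_on_def)

lemma continuous_on_trig_poly_deriv: "continuous_on S (\<lambda>x. trig_poly_deriv L x h)"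
  by (induction L) (auto simp: trig_poly_deriv_def mode_deriv_def intro!: continuous_intros)

lemma trig_poly_deriv_zero [simp]: "trig_poly_deriv L x 0 = 0"
  by (induction L) (auto simp: trig_poly_deriv_def mode_deriv_def)

lemma trig_poly_deriv_add: "trig_poly_deriv L x (h + h') = trig_poly_deriv L x h + trig_poly_deriv L x h'"
  by (induction L) (auto simp: trig_poly_deriv_def mode_deriv_def inner_add_right scaleR_add_left)

lemma dir_deriv_trig_poly: "dir_deriv (trig_poly L) (trig_poly L') x = trig_poly_deriv L' x (trig_poly L x)"
  by (simp add: dir_deriv_def frechet_derivative_trig_poly)

lemma kr_add: "kr (j + k) = kr j + kr k"
  and kr_diff: "kr (j - k) = kr j - kr k"
  and kr_uminus: "kr (- k) = - kr k"
  and kr_0 [simp]: "kr 0 = 0"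
  and kr_eq_0_iff [simp]: "kr k = 0 \<longleftrightarrow> k = 0"
  by (auto simp: kr_def vec_eq_iff)

lemma inner_axis_one [simp]: "(x::real^'n) \<bullet> axis i 1 = x $ i"
  by (simp add: inner_axis)

text \<open>The product-to-sum formulas applied to \<open>mode_deriv k C D x (mode j A B x) +
  mode_deriv j A B x (mode k C D x)\<close>.\<close>

definition interaction :: "wave \<Rightarrow> wave \<Rightarrow> wave list" where
  "interaction = (\<lambda>(j, A, B) (k, C, D).
     [(j + k, (1/2) *\<^sub>R ((A \<bullet> kr k) *\<^sub>R D + (B \<bullet> kr k) *\<^sub>R C + (C \<bullet> kr j) *\<^sub>R B + (D \<bullet> kr j) *\<^sub>R A),
              (1/2) *\<^sub>R (- (A \<bullet> kr k) *\<^sub>R C + (B \<bullet> kr k) *\<^sub>R D - (C \<bullet> kr j) *\<^sub>R A + (D \<bullet> kr j) *\<^sub>R B)),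
      (j - k, (1/2) *\<^sub>R ((A \<bullet> kr k) *\<^sub>R D - (B \<bullet> kr k) *\<^sub>R C + (C \<bullet> kr j) *\<^sub>R B - (D \<bullet> kr j) *\<^sub>R A),
              (1/2) *\<^sub>R ((A \<bullet> kr k) *\<^sub>R C + (B \<bullet> kr k) *\<^sub>R D - (C \<bullet> kr j) *\<^sub>R A - (D \<bullet> kr j) *\<^sub>R B))])"

lemma mode_advection:
  "mode_deriv k C D x (mode j A B x) + mode_deriv j A B x (mode k C D x)
     = trig_poly (interaction (j, A, B) (k, C, D)) x"
  unfolding interaction_def
  by (simp add: mode_def mode_deriv_def kr_add kr_diff inner_add_left inner_diff_left
      inner_add_right inner_diff_right cos_add sin_add cos_diff sin_diff inner_commute vec_eq_iff
      field_simps)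

definition advection :: "wave list \<Rightarrow> wave list \<Rightarrow> wave list" where
  "advection L L' = concat (map (\<lambda>w. concat (map (interaction w) L')) L)"

lemma trig_poly_concat: "trig_poly (concat Ls) x = (\<Sum>L\<leftarrow>Ls. trig_poly L x)"
  by (induction Ls) auto

lemma mode_trig_poly_advection:
  "trig_poly_deriv L x (mode j A B x) + mode_deriv j A B x (trig_poly L x)
     = trig_poly (concat (map (interaction (j, A, B)) L)) x"
proof (induction L)
  case (Cons w L)
  obtain k C D where w: "w = (k, C, D)" by (cases w)
  have "trig_poly_deriv (w # L) x (mode j A B x) + mode_deriv j A B x (trig_poly (w # L) x)
      = (mode_deriv k C D x (mode j A B x) + mode_deriv j A B x (mode k C D x))
        + (trig_poly_deriv L x (mode j A B x) + mode_deriv j A B x (trig_poly L x))"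
    by (simp add: w mode_deriv_def inner_add_right scaleR_add_left algebra_simps)
  with Cons.IH show ?case
    by (simp add: w mode_advection trig_poly_concat)
qed (simp add: mode_deriv_def)

lemma trig_poly_advection:
  "dir_deriv (trig_poly L) (trig_poly L') x + dir_deriv (trig_poly L') (trig_poly L) x
     = trig_poly (advection L L') x"
  unfolding dir_deriv_trig_poly advection_def
proof (induction L)
  case (Cons w L)
  obtain j A B where w: "w = (j, A, B)" by (cases w)
  have "trig_poly_deriv L' x (trig_poly (w # L) x) + trig_poly_deriv (w # L) x (trig_poly L' x)
      = (trig_poly_deriv L' x (mode j A B x) + mode_deriv j A B x (trig_poly L' x))
        + (trig_poly_deriv L' x (trig_poly L x) + trig_poly_deriv L x (trig_poly L' x))"
    by (simp add: w trig_poly_deriv_add algebra_simps)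
  with Cons.IH show ?case
    by (simp add: w mode_trig_poly_advection)
qed simp

section \<open>Integration over the torus\<close>

lemma kr_inner_shift: "kr k \<bullet> (x + c *\<^sub>R axis i 1) = kr k \<bullet> x + c * of_int (k $ i)"
  by (simp add: inner_add_right kr_def)

lemma cos_kr_shift [simp]: "cos (kr k \<bullet> (x + (2*pi) *\<^sub>R axis i 1)) = cos (kr k \<bullet> x)"
  and sin_kr_shift [simp]: "sin (kr k \<bullet> (x + (2*pi) *\<^sub>R axis i 1)) = sin (kr k \<bullet> x)"
  by (simp_all add: kr_inner_shift cos_add sin_add)

lemma periodic_shift_int:
  fixes f :: "real^3 \<Rightarrow> 'a"
  assumes per: "\<And>x. f (x + (2*pi) *\<^sub>R axis i 1) = f x"
  shows "f (x + (2*pi * of_int n) *\<^sub>R axis i 1) = f x"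
proof (induction n arbitrary: x rule: int_induct[where k = 0])
  case (step1 n)
  have "x + (2*pi * of_int (n + 1)) *\<^sub>R axis i 1 = (x + (2*pi * of_int n) *\<^sub>R axis i 1) + (2*pi) *\<^sub>R axis i 1"
    by (simp add: algebra_simps)
  then show ?case using per step1 by metis
next
  case (step2 n)
  have "x + (2*pi * of_int n) *\<^sub>R axis i 1 = (x + (2*pi * of_int (n - 1)) *\<^sub>R axis i 1) + (2*pi) *\<^sub>R axis i 1"
    by (simp add: algebra_simps)
  then show ?case using per step2 by metis
qed simp

lemma periodic_value_in_torus_cell:
  fixes f :: "real^3 \<Rightarrow> 'a"
  assumes per: "\<And>x i. f (x + (2*pi) *\<^sub>R axis i 1) = f x"
  obtains y where "y \<in> torus_cell" "f x = f y"
proof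
  define n where "n i = \<lfloor>x $ i / (2*pi)\<rfloor>" for i
  define y where "y = (\<chi> i. x $ i - 2*pi * of_int (n i))"
  have "x = ((y + (2*pi * of_int (n 1)) *\<^sub>R axis 1 1) + (2*pi * of_int (n 2)) *\<^sub>R axis 2 1)
      + (2*pi * of_int (n 3)) *\<^sub>R axis 3 1"
    by (simp add: vec_eq_iff forall_3 y_def axis_def)
  then show "f x = f y"
    by (simp only: periodic_shift_int per)
  have "0 \<le> y $ i \<and> y $ i \<le> 2*pi" for i
  proof -
    have "of_int (n i) \<le> x $ i / (2*pi)" "x $ i / (2*pi) < of_int (n i) + 1"
      unfolding n_def by linarith+
    then show ?thesis
      using pi_gt_zero by (simp add: y_def field_simps)
  qed
  then show "y \<in> torus_cell"
    by (simp add: torus_cell_def mem_box_cart)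
qed

lemma integrable_on_torus_cell:
  fixes f :: "real^3 \<Rightarrow> 'b::banach"
  shows "continuous_on UNIV f \<Longrightarrow> f integrable_on torus_cell"
  unfolding torus_cell_def by (rule integrable_continuous) (rule continuous_on_subset, auto)

text \<open>The shifted cell consists of the slab \<open>t \<le> x$i \<le> 2\<pi>\<close> of the cell and the translate by
  \<open>2\<pi> e\<^sub>i\<close> of the slab \<open>0 \<le> x$i \<le> t\<close>.\<close>

lemma integral_torus_cell_shift_nonneg:
  fixes f :: "real^3 \<Rightarrow> 'b::banach"
  assumes cont: "continuous_on UNIV f"
    and per: "\<And>x. f (x + (2*pi) *\<^sub>R axis i 1) = f x"
    and t: "0 \<le> t" "t \<le> 2*pi"
  shows "integral torus_cell (\<lambda>x. f (x + t *\<^sub>R axis i 1)) = integral torus_cell f"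
proof -
  define e :: "real^3" where "e = axis i 1"
  define P :: "real^3" where "P = (\<chi> i. 2 * pi)"
  define Q where "Q = P - (2*pi - t) *\<^sub>R e"
  have e: "e \<in> Basis"
    by (simp add: e_def)
  have int: "f integrable_on cbox a b" for a b
    using cont continuous_on_subset integrable_continuous by blast
  have shift: "integral (cbox a b) (\<lambda>x. f (x + c)) = integral (cbox (a + c) (b + c)) f" for a b c
    using integral_shift_cbox_plus[of a b f c] by (simp add: o_def add.commute)
  have "axis i 1 $ j = (if j = i then 1 else 0)" for j
    by (simp add: axis_def)
  note box_simps = mem_box_cart Q_def P_def e_def this
  have "cbox 0 P \<inter> {x. x \<bullet> e \<le> t} = cbox 0 Q" "cbox 0 P \<inter> {x. t \<le> x \<bullet> e} = cbox (t *\<^sub>R e) P"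
    using t by (auto simp: box_simps split: if_splits) (smt (verit))+
  then have split1: "integral (cbox 0 P) f = integral (cbox 0 Q) f + integral (cbox (t *\<^sub>R e) P) f"
    using integral_split[OF int e, of 0 P t] by simp
  have "cbox (t *\<^sub>R e) (P + t *\<^sub>R e) \<inter> {x. x \<bullet> e \<le> 2*pi} = cbox (t *\<^sub>R e) P"
    "cbox (t *\<^sub>R e) (P + t *\<^sub>R e) \<inter> {x. 2*pi \<le> x \<bullet> e} = cbox (0 + (2*pi) *\<^sub>R e) (Q + (2*pi) *\<^sub>R e)"
    using t by (auto simp: box_simps split: if_splits) (smt (verit))+
  then have split2: "integral (cbox (t *\<^sub>R e) (P + t *\<^sub>R e)) f
      = integral (cbox (t *\<^sub>R e) P) f + integral (cbox (0 + (2*pi) *\<^sub>R e) (Q + (2*pi) *\<^sub>R e)) f"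
    using integral_split[OF int e, of "t *\<^sub>R e" "P + t *\<^sub>R e" "2*pi"] by simp
  have "integral (cbox (0 + (2*pi) *\<^sub>R e) (Q + (2*pi) *\<^sub>R e)) f = integral (cbox 0 Q) f"
    using shift[of 0 Q "(2*pi) *\<^sub>R e"] per by (simp add: e_def)
  with shift[of 0 P "t *\<^sub>R e"] split1 split2 show ?thesis
    by (simp add: torus_cell_def P_def e_def)
qed

lemma integral_torus_cell_shift:
  fixes f :: "real^3 \<Rightarrow> 'b::banach"
  assumes cont: "continuous_on UNIV f"
    and per: "\<And>x. f (x + (2*pi) *\<^sub>R axis i 1) = f x"
  shows "integral torus_cell (\<lambda>x. f (x + t *\<^sub>R axis i 1)) = integral torus_cell f"
proof -
  define n where "n = \<lfloor>t / (2*pi)\<rfloor>"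
  define s where "s = t - 2*pi * of_int n"
  have s: "0 \<le> s" "s \<le> 2*pi"
  proof -
    have "of_int n \<le> t / (2*pi)" "t / (2*pi) < of_int n + 1"
      unfolding n_def by linarith+
    then show "0 \<le> s" "s \<le> 2*pi"
      using pi_gt_zero by (simp_all add: s_def field_simps)
  qed
  have "f (x + t *\<^sub>R axis i 1) = f (x + s *\<^sub>R axis i 1)" for x
    using periodic_shift_int[of f i "x + s *\<^sub>R axis i 1" n] per
    by (simp add: s_def algebra_simps)
  then show ?thesis
    using integral_torus_cell_shift_nonneg[OF cont per s] by simp
qed

lemma has_field_derivative_along_line:
  fixes f :: "'a::real_normed_vector \<Rightarrow> real"
  assumes der: "\<And>x. (f has_derivative f' x) (at x)"
  shows "((\<lambda>t. f (x + t *\<^sub>R e)) has_field_derivative f' (x + t *\<^sub>R e) e) (at t within S)"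
proof -
  have "((\<lambda>t. x + t *\<^sub>R e) has_derivative (\<lambda>s. s *\<^sub>R e)) (at t within S)"
    by (auto intro!: derivative_eq_intros)
  from has_derivative_compose[OF this has_derivative_at_withinI[OF der]]
  have "((\<lambda>t. f (x + t *\<^sub>R e)) has_derivative (\<lambda>s. f' (x + t *\<^sub>R e) (s *\<^sub>R e))) (at t within S)"
    by (simp add: o_def)
  moreover have "(\<lambda>s. f' (x + t *\<^sub>R e) (s *\<^sub>R e)) = (*) (f' (x + t *\<^sub>R e) e)"
    using linear_scale[OF has_derivative_linear[OF der]] by (auto simp: mult.commute)
  ultimately show ?thesis
    by (simp add: has_field_derivative_def)
qed

text \<open>Differentiating the translation invariance \<open>\<integral> f(x + t e\<^sub>i) dx = \<integral> f\<close> at \<open>t = 0\<close>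
  under the integral sign.\<close>

lemma integral_torus_cell_partial_derivative_eq_0:
  fixes f :: "real^3 \<Rightarrow> real"
  assumes der: "\<And>x. (f has_derivative f' x) (at x)"
    and cont: "continuous_on UNIV (\<lambda>x. f' x (axis i 1))"
    and per: "\<And>x. f (x + (2*pi) *\<^sub>R axis i 1) = f x"
  shows "integral torus_cell (\<lambda>x. f' x (axis i 1)) = 0"
proof -
  define e :: "real^3" where "e = axis i 1"
  define P :: "real^3" where "P = (\<chi> i. 2 * pi)"
  have cf: "continuous_on UNIV f"
    using der by (meson continuous_at_imp_continuous_on has_derivative_continuous)
  have "(\<lambda>y. f (y + t *\<^sub>R e)) integrable_on cbox 0 P" for t
    by (rule integrable_continuous, rule continuous_on_compose2[OF cf]) (auto intro!: continuous_intros)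
  moreover have "continuous_on (UNIV \<times> cbox 0 P) (\<lambda>(t, y). f' (y + t *\<^sub>R e) e)"
  proof -
    have "continuous_on (UNIV \<times> cbox 0 P) (\<lambda>z. snd z + fst z *\<^sub>R e)"
      by (intro continuous_intros)
    from continuous_on_compose2[OF cont[folded e_def] this] show ?thesis
      by (simp add: case_prod_unfold)
  qed
  ultimately have "((\<lambda>t. integral (cbox 0 P) (\<lambda>y. f (y + t *\<^sub>R e))) has_field_derivative
      integral (cbox 0 P) (\<lambda>y. f' (y + 0 *\<^sub>R e) e)) (at 0 within UNIV)"
    using has_field_derivative_along_line[OF der] by (intro leibniz_rule_field_derivative) auto
  moreover have "(\<lambda>t. integral (cbox 0 P) (\<lambda>y. f (y + t *\<^sub>R e))) = (\<lambda>t. integral torus_cell f)"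
    using integral_torus_cell_shift[OF cf per] by (simp add: torus_cell_def P_def e_def)
  ultimately have
    "((\<lambda>t. integral torus_cell f) has_field_derivative integral torus_cell (\<lambda>x. f' x e)) (at 0)"
    by (simp add: torus_cell_def P_def)
  then show ?thesis
    using DERIV_const DERIV_unique e_def by blast
qed

lemma integral_torus_cell_cos_sin_eq_0:
  assumes "k \<noteq> 0"
  shows "integral torus_cell (\<lambda>x. cos (kr k \<bullet> x)) = 0" "integral torus_cell (\<lambda>x. sin (kr k \<bullet> x)) = 0"
proof -
  obtain i where "k $ i \<noteq> 0"
    using assms by (auto simp: vec_eq_iff)
  then have ki: "kr k \<bullet> axis i 1 \<noteq> 0"
    by (simp add: kr_def)
  have "integral torus_cell (\<lambda>x. cos (kr k \<bullet> x) * (kr k \<bullet> axis i 1)) = 0"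
    by (rule integral_torus_cell_partial_derivative_eq_0[where f = "\<lambda>x. sin (kr k \<bullet> x)"])
      (auto intro!: derivative_eq_intros continuous_intros)
  then show "integral torus_cell (\<lambda>x. cos (kr k \<bullet> x)) = 0"
    using ki by simp
  have "integral torus_cell (\<lambda>x. - (sin (kr k \<bullet> x) * (kr k \<bullet> axis i 1))) = 0"
    by (rule integral_torus_cell_partial_derivative_eq_0[where f = "\<lambda>x. cos (kr k \<bullet> x)"])
      (auto intro!: derivative_eq_intros continuous_intros)
  then show "integral torus_cell (\<lambda>x. sin (kr k \<bullet> x)) = 0"
    using ki by simp
qed

lemma integral_torus_cell_mode_eq_0:
  assumes "k \<noteq> 0"
  shows "integral torus_cell (mode k A B) = 0"
proof -
  have int: "(\<lambda>x. cos (kr k \<bullet> x)) integrable_on torus_cell" "(\<lambda>x. sin (kr k \<bullet> x)) integrable_on torus_cell"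
    by (auto intro!: integrable_on_torus_cell continuous_intros)
  have "((\<lambda>x. cos (kr k \<bullet> x) *\<^sub>R A + sin (kr k \<bullet> x) *\<^sub>R B) has_integral 0 *\<^sub>R A + 0 *\<^sub>R B) torus_cell"
    using has_integral_add[OF has_integral_scaleR_left has_integral_scaleR_left,
        OF int[THEN integrable_integral]]
    by (simp only: integral_torus_cell_cos_sin_eq_0[OF assms])
  then show ?thesis
    by (simp add: mode_def integral_unique)
qed

section \<open>Solenoidal fields and the Leray projection of trigonometric polynomials\<close>

lemma solenoidalD:
  assumes "solenoidal w"
  shows "\<And>x i. w (x + (2*pi) *\<^sub>R axis i 1) = w x"
    and "\<And>x. (w has_derivative frechet_derivative w (at x)) (at x)"
    and "\<And>i. continuous_on UNIV (\<lambda>x. frechet_derivative w (at x) (axis i 1))"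
    and "\<And>x. divergence w x = 0"
    and "integral torus_cell w = 0"
    and "continuous_on UNIV w"
proof -
  show der: "\<And>x. (w has_derivative frechet_derivative w (at x)) (at x)"
    using assms by (simp add: solenoidal_def frechet_derivative_works)
  then show "continuous_on UNIV w"
    by (meson continuous_at_imp_continuous_on has_derivative_continuous)
qed (use assms in \<open>simp_all add: solenoidal_def periodic_field_def\<close>)

lemma solenoidal_diff:
  assumes "solenoidal v" "solenoidal w"
  shows "solenoidal (\<lambda>x. v x - w x)"
proof -
  note v = solenoidalD[OF assms(1)] and w = solenoidalD[OF assms(2)]
  have der: "((\<lambda>x. v x - w x) has_derivative
      (\<lambda>h. frechet_derivative v (at x) h - frechet_derivative w (at x) h)) (at x)" for x
    by (rule has_derivative_diff[OF v(2) w(2)])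
  then have fd: "frechet_derivative (\<lambda>x. v x - w x) (at x)
      = (\<lambda>h. frechet_derivative v (at x) h - frechet_derivative w (at x) h)" for x
    by (rule frechet_derivative_at[symmetric])
  have "divergence (\<lambda>x. v x - w x) x = 0" for x
    using v(4)[of x] w(4)[of x] by (simp add: divergence_def fd sum_subtractf)
  moreover have "integral torus_cell (\<lambda>x. v x - w x) = 0"
    using v(5) w(5) integral_diff[OF integrable_on_torus_cell[OF v(6)] integrable_on_torus_cell[OF w(6)]]
    by simp
  moreover have "continuous_on UNIV (\<lambda>x. frechet_derivative (\<lambda>x. v x - w x) (at x) (axis i 1))" for i
    unfolding fd by (intro continuous_intros v(3) w(3))
  moreover have "(\<lambda>x. v x - w x) differentiable at x" for x
    using der differentiable_def by blast
  ultimately show ?thesis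
    unfolding solenoidal_def periodic_field_def using v(1) w(1) by simp
qed

lemma sum_partial_derivatives_product:
  fixes \<phi>' :: "real^'n \<Rightarrow> real"
  assumes "linear \<phi>'"
  shows "(\<Sum>i\<in>UNIV. \<phi>' (axis i 1) * v $ i + \<phi> * W (axis i 1) $ i)
    = \<phi>' v + \<phi> * (\<Sum>i\<in>UNIV. W (axis i 1) $ i)"
proof -
  have "(\<Sum>i\<in>UNIV. \<phi>' (axis i 1) * v $ i) = \<phi>' (\<Sum>i\<in>UNIV. v $ i *\<^sub>R axis i 1)"
    by (simp add: linear_sum[OF assms] linear_scale[OF assms] mult.commute)
  also have "\<dots> = \<phi>' v"
    using basis_expansion[of v] by (simp add: scalar_mult_eq_scaleR)
  finally show ?thesis
    by (simp add: sum.distrib sum_distrib_left)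
qed

text \<open>Integration by parts: \<open>\<integral> \<nabla>\<phi> \<cdot> w = - \<integral> \<phi> div w = 0\<close>.\<close>

lemma integral_torus_cell_derivative_solenoidal_eq_0:
  fixes \<phi> :: "real^3 \<Rightarrow> real"
  assumes der: "\<And>x. (\<phi> has_derivative \<phi>' x) (at x)"
    and cont: "\<And>i. continuous_on UNIV (\<lambda>x. \<phi>' x (axis i 1))"
    and per: "\<And>x i. \<phi> (x + (2*pi) *\<^sub>R axis i 1) = \<phi> x"
    and w: "solenoidal w"
  shows "integral torus_cell (\<lambda>x. \<phi>' x (w x)) = 0"
proof -
  note w = solenoidalD[OF w]
  define W where "W x = frechet_derivative w (at x)" for x
  define g where "g i x = \<phi>' x (axis i 1) * w x $ i + \<phi> x * W x (axis i 1) $ i" for i x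
  have "continuous_on UNIV \<phi>"
    using der by (meson continuous_at_imp_continuous_on has_derivative_continuous)
  then have cont_g: "continuous_on UNIV (g i)" for i
    unfolding g_def W_def by (intro continuous_intros cont w(3,6))
  have "((\<lambda>x. \<phi> x * w x $ i) has_derivative (\<lambda>h. \<phi>' x h * w x $ i + \<phi> x * W x h $ i)) (at x)" for i x
    using has_derivative_mult[OF der bounded_linear.has_derivative[OF bounded_linear_vec_nth w(2)]]
    by (simp add: W_def algebra_simps)
  then have "integral torus_cell (g i) = 0" for i
    unfolding g_def
    by (rule integral_torus_cell_partial_derivative_eq_0) (use cont_g in \<open>simp_all add: g_def per w(1)\<close>)
  then have "integral torus_cell (\<lambda>x. \<Sum>i\<in>UNIV. g i x) = 0"
    by (subst integral_sum) (auto intro: integrable_on_torus_cell cont_g)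
  moreover have "(\<Sum>i\<in>UNIV. g i x) = \<phi>' x (w x)" for x
    using sum_partial_derivatives_product[OF has_derivative_linear[OF der],
        where v = "w x" and \<phi> = "\<phi> x" and W = "W x"] w(4)
    by (simp add: g_def divergence_def W_def)
  ultimately show ?thesis
    by simp
qed

lemma periodic_eq_0_if_integral_inner_self_eq_0:
  fixes d :: vfield
  assumes cont: "continuous_on UNIV d"
    and per: "\<And>x i. d (x + (2*pi) *\<^sub>R axis i 1) = d x"
    and int: "integral torus_cell (\<lambda>x. d x \<bullet> d x) = 0"
  shows "d x = 0"
proof -
  have c: "continuous_on UNIV (\<lambda>x. d x \<bullet> d x)"
    by (intro continuous_intros cont)
  have "((\<lambda>x. d x \<bullet> d x) has_integral 0) (cbox 0 (\<chi> i. 2 * pi))"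
    using integrable_integral[OF integrable_on_torus_cell[OF c]] int by (simp add: torus_cell_def)
  moreover have "box 0 (\<chi> i. 2 * pi) \<noteq> ({}::(real^3) set)"
    by (simp add: box_ne_empty inner_axis Basis_vec_def)
  moreover have "continuous_on (cbox 0 (\<chi> i. 2 * pi)) (\<lambda>x. d x \<bullet> d x)"
    using c continuous_on_subset by blast
  ultimately have "d y \<bullet> d y = 0" if "y \<in> torus_cell" for y
    using has_integral_0_cbox_imp_0[of 0 "\<chi> i. 2 * pi" "\<lambda>x. d x \<bullet> d x" y] that
    by (simp add: torus_cell_def)
  then have "d y = 0" if "y \<in> torus_cell" for y
    using that by simp
  with periodic_value_in_torus_cell[of d x] per show ?thesis
    by metis
qed

lemma solenoidal_eq_if_orthogonal_residuals:
  assumes u: "continuous_on UNIV u" and v: "solenoidal v" and v': "solenoidal v'"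
    and orth: "\<forall>w. solenoidal w \<longrightarrow> integral torus_cell (\<lambda>x. (u x - v x) \<bullet> w x) = 0"
    and orth': "\<forall>w. solenoidal w \<longrightarrow> integral torus_cell (\<lambda>x. (u x - v' x) \<bullet> w x) = 0"
  shows "v = v'"
proof -
  define d where "d x = v x - v' x" for x
  have sol_d: "solenoidal d"
    unfolding d_def by (rule solenoidal_diff[OF v v'])
  note d = solenoidalD[OF sol_d] and v = solenoidalD[OF v] and v' = solenoidalD[OF v']
  have int: "(\<lambda>x. (u x - v' x) \<bullet> d x) integrable_on torus_cell"
    "(\<lambda>x. (u x - v x) \<bullet> d x) integrable_on torus_cell"
    by (intro integrable_on_torus_cell continuous_intros u v(6) v'(6) d(6))+
  have "integral torus_cell (\<lambda>x. d x \<bullet> d x)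
      = integral torus_cell (\<lambda>x. (u x - v' x) \<bullet> d x - (u x - v x) \<bullet> d x)"
    by (simp add: d_def algebra_simps inner_diff_left)
  also have "\<dots> = 0"
    using integral_diff[OF int] orth orth' sol_d by simp
  finally have "d x = 0" for x
    by (rule periodic_eq_0_if_integral_inner_self_eq_0[OF d(6) d(1)])
  then show ?thesis
    by (auto simp: d_def fun_eq_iff)
qed

definition transverse_wave :: "wave \<Rightarrow> bool" where
  "transverse_wave = (\<lambda>(k, A, B). A \<bullet> kr k = 0 \<and> B \<bullet> kr k = 0 \<and> (k = 0 \<longrightarrow> A = 0 \<and> B = 0))"

lemma integral_torus_cell_trig_poly_eq_0:
  "\<forall>w\<in>set L. transverse_wave w \<Longrightarrow> integral torus_cell (trig_poly L) = 0"
proof (induction L)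
  case (Cons w L)
  obtain k A B where w: "w = (k, A, B)" by (cases w)
  have "integral torus_cell (\<lambda>x. mode k A B x + trig_poly L x)
      = integral torus_cell (mode k A B) + integral torus_cell (trig_poly L)"
    by (intro integral_add integrable_on_torus_cell continuous_on_trig_poly)
      (auto simp: mode_def intro!: continuous_intros)
  moreover have "integral torus_cell (mode k A B) = 0"
    using Cons.prems integral_torus_cell_mode_eq_0[of k A B]
    by (cases "k = 0") (auto simp: w transverse_wave_def mode_def)
  ultimately show ?case
    using Cons by (simp add: w trig_poly_def)
qed (simp add: trig_poly_def)

lemma sum_mode_deriv_axis:
  "(\<Sum>i\<in>UNIV. mode_deriv k A B x (axis i 1) $ i)
     = cos (kr k \<bullet> x) * (kr k \<bullet> B) - sin (kr k \<bullet> x) * (kr k \<bullet> A)"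
proof -
  have "mode_deriv k A B x (axis i 1) $ i
      = cos (kr k \<bullet> x) * (kr k $ i * B $ i) - sin (kr k \<bullet> x) * (kr k $ i * A $ i)" for i
    by (simp add: mode_deriv_def algebra_simps)
  then show ?thesis
    by (simp add: sum_subtractf sum_distrib_left inner_vec_def)
qed

lemma solenoidal_trig_poly:
  assumes "\<forall>w\<in>set L. transverse_wave w"
  shows "solenoidal (trig_poly L)"
proof -
  have "divergence (trig_poly L) x = 0" for x
    unfolding divergence_def frechet_derivative_trig_poly using assms
  proof (induction L)
    case (Cons w L)
    then show ?case
      by (cases w) (simp add: sum.distrib sum_mode_deriv_axis transverse_wave_def inner_commute)
  qed simp
  moreover have "trig_poly L (x + (2*pi) *\<^sub>R axis i 1) = trig_poly L x" for x i
    by (simp add: trig_poly_def mode_def)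
  ultimately show ?thesis
    unfolding solenoidal_def periodic_field_def
    using integral_torus_cell_trig_poly_eq_0[OF assms]
    by (simp add: differentiable_trig_poly frechet_derivative_trig_poly continuous_on_trig_poly_deriv)
qed

text \<open>The constant mode is discarded because solenoidal fields have mean zero.\<close>

definition leray_amp :: "int^3 \<Rightarrow> real^3 \<Rightarrow> real^3" where
  "leray_amp k C = (if k = 0 then 0 else C - (C \<bullet> kr k / (kr k \<bullet> kr k)) *\<^sub>R kr k)"

definition leray_wave :: "wave \<Rightarrow> wave" where
  "leray_wave = (\<lambda>(k, A, B). (k, leray_amp k A, leray_amp k B))"

lemma leray_amp_orthogonal: "leray_amp k C \<bullet> kr k = 0"
  by (simp add: leray_amp_def inner_diff_left)

lemma leray_amp_add: "leray_amp k (A + B) = leray_amp k A + leray_amp k B"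
  and leray_amp_diff: "leray_amp k (A - B) = leray_amp k A - leray_amp k B"
  and leray_amp_scaleR: "leray_amp k (c *\<^sub>R A) = c *\<^sub>R leray_amp k A"
  and leray_amp_uminus: "leray_amp k (- A) = - leray_amp k A"
  and leray_amp_zero: "leray_amp k 0 = 0"
  by (simp_all add: leray_amp_def inner_add_left inner_diff_left algebra_simps add_divide_distrib
      diff_divide_distrib)

lemma inner_leray_amp: "k \<noteq> 0 \<Longrightarrow> kr k \<bullet> y = 0 \<Longrightarrow> leray_amp k C \<bullet> y = C \<bullet> y"
  by (simp add: leray_amp_def inner_diff_left)

lemma leray_amp_id: "k \<noteq> 0 \<Longrightarrow> C \<bullet> kr k = 0 \<Longrightarrow> leray_amp k C = C"
  by (simp add: leray_amp_def)

lemma transverse_leray_wave: "transverse_wave (leray_wave w)"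
  by (cases w) (simp add: transverse_wave_def leray_wave_def leray_amp_orthogonal leray_amp_def[of 0])

text \<open>For \<open>k \<noteq> 0\<close> the remainder is the gradient of \<open>a sin(k\<cdot>x) - b cos(k\<cdot>x)\<close>; for \<open>k = 0\<close> it is
  constant.\<close>

lemma integral_torus_cell_mode_residual_inner_eq_0:
  assumes w: "solenoidal w"
  shows "integral torus_cell
    (\<lambda>x. (mode k A B x - mode k (leray_amp k A) (leray_amp k B) x) \<bullet> w x) = 0"
proof (cases "k = 0")
  case True
  have "integral torus_cell (\<lambda>x. A \<bullet> w x) = A \<bullet> integral torus_cell w"
    using integral_linear[OF integrable_on_torus_cell[OF solenoidalD(6)[OF w]]
        bounded_linear_inner_right[of A]]
    by (simp add: o_def)
  with True solenoidalD(5)[OF w] show ?thesis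
    by (simp add: mode_def leray_amp_def)
next
  case False
  define a where "a = A \<bullet> kr k / (kr k \<bullet> kr k)"
  define b where "b = B \<bullet> kr k / (kr k \<bullet> kr k)"
  have "(mode k A B x - mode k (leray_amp k A) (leray_amp k B) x) \<bullet> w x
      = (a * cos (kr k \<bullet> x) + b * sin (kr k \<bullet> x)) * (kr k \<bullet> w x)" for x
    using False by (simp add: mode_def leray_amp_def a_def b_def inner_add_left algebra_simps)
  moreover have
    "integral torus_cell (\<lambda>x. (a * cos (kr k \<bullet> x) + b * sin (kr k \<bullet> x)) * (kr k \<bullet> w x)) = 0"
  proof (rule integral_torus_cell_derivative_solenoidal_eq_0[OF _ _ _ w])
    show "((\<lambda>x. a * sin (kr k \<bullet> x) - b * cos (kr k \<bullet> x)) has_derivative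
        (\<lambda>h. (a * cos (kr k \<bullet> x) + b * sin (kr k \<bullet> x)) * (kr k \<bullet> h))) (at x)" for x
      by (auto intro!: derivative_eq_intros simp: algebra_simps)
  qed (auto intro!: continuous_intros)
  ultimately show ?thesis
    by simp
qed

lemma integral_torus_cell_trig_poly_residual_inner_eq_0:
  assumes w: "solenoidal w"
  shows "integral torus_cell (\<lambda>x. (trig_poly L x - trig_poly (map leray_wave L) x) \<bullet> w x) = 0"
proof (induction L)
  case (Cons v L)
  obtain k A B where v: "v = (k, A, B)" by (cases v)
  have "(\<lambda>x. (trig_poly (v # L) x - trig_poly (map leray_wave (v # L)) x) \<bullet> w x)
     = (\<lambda>x. (mode k A B x - mode k (leray_amp k A) (leray_amp k B) x) \<bullet> w x
          + (trig_poly L x - trig_poly (map leray_wave L) x) \<bullet> w x)"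
    by (simp add: fun_eq_iff v leray_wave_def inner_diff_left inner_add_left algebra_simps)
  moreover have "integral torus_cell \<dots>
      = integral torus_cell
          (\<lambda>x. (mode k A B x - mode k (leray_amp k A) (leray_amp k B) x) \<bullet> w x)
        + integral torus_cell (\<lambda>x. (trig_poly L x - trig_poly (map leray_wave L) x) \<bullet> w x)"
    by (intro integral_add integrable_on_torus_cell continuous_intros continuous_on_trig_poly
        solenoidalD(6)[OF w]) (simp_all add: mode_def continuous_intros)
  ultimately show ?case
    using Cons.IH integral_torus_cell_mode_residual_inner_eq_0[OF w] by simp
qed simp

theorem leray_trig_poly: "leray (trig_poly L) = trig_poly (map leray_wave L)"
  unfolding leray_def
proof (rule the_equality)
  have sol: "solenoidal (trig_poly (map leray_wave L))"
    by (rule solenoidal_trig_poly) (simp add: transverse_leray_wave)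
  then show "solenoidal (trig_poly (map leray_wave L)) \<and> (\<forall>w. solenoidal w \<longrightarrow>
      integral torus_cell (\<lambda>x. (trig_poly L x - trig_poly (map leray_wave L) x) \<bullet> w x) = 0)"
    using integral_torus_cell_trig_poly_residual_inner_eq_0 by blast
  then show "v = trig_poly (map leray_wave L)" if "solenoidal v \<and> (\<forall>w. solenoidal w \<longrightarrow>
      integral torus_cell (\<lambda>x. (trig_poly L x - v x) \<bullet> w x) = 0)" for v
    using solenoidal_eq_if_orthogonal_residuals[OF continuous_on_trig_poly, of v] that sol by blast
qed

theorem Bop_trig_poly:
  "Bop (trig_poly L) (trig_poly L') = trig_poly (map leray_wave (advection L L'))"
  using trig_poly_advection[of L L'] by (simp add: Bop_def leray_trig_poly[symmetric] fun_eq_iff)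

lemma fspanI: "finite T \<Longrightarrow> T \<subseteq> S \<Longrightarrow> f = (\<lambda>x. \<Sum>e\<in>T. c e *\<^sub>R e x) \<Longrightarrow> f \<in> fspan S"
  unfolding fspan_def by blast

lemma fspan_zero: "(\<lambda>x. 0) \<in> fspan S"
  by (rule fspanI[of "{}"]) auto

lemma fspan_superset: "f \<in> S \<Longrightarrow> f \<in> fspan S"
  by (rule fspanI[of "{f}" _ _ "\<lambda>_. 1"]) auto

lemma fspan_scaleR:
  assumes "f \<in> fspan S"
  shows "(\<lambda>x. a *\<^sub>R f x) \<in> fspan S"
proof -
  obtain T c where "finite T" "T \<subseteq> S" and f: "f = (\<lambda>x. \<Sum>e\<in>T. c e *\<^sub>R e x)"
    using assms unfolding fspan_def by blast
  then show ?thesis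
    by (intro fspanI[where c = "\<lambda>e. a * c e"]) (auto simp: scaleR_sum_right)
qed

lemma fspan_add:
  assumes "f \<in> fspan S" "g \<in> fspan S"
  shows "(\<lambda>x. f x + g x) \<in> fspan S"
proof -
  obtain T c U d where TU: "finite T" "T \<subseteq> S" "finite U" "U \<subseteq> S"
    and f: "f = (\<lambda>x. \<Sum>e\<in>T. c e *\<^sub>R e x)" and g: "g = (\<lambda>x. \<Sum>e\<in>U. d e *\<^sub>R e x)"
    using assms unfolding fspan_def by blast
  define c' where "c' e = (if e \<in> T then c e else 0)" for e
  define d' where "d' e = (if e \<in> U then d e else 0)" for e
  have "(\<Sum>e\<in>T. c e *\<^sub>R e x) = (\<Sum>e\<in>T \<union> U. c' e *\<^sub>R e x)"
    "(\<Sum>e\<in>U. d e *\<^sub>R e x) = (\<Sum>e\<in>T \<union> U. d' e *\<^sub>R e x)" for x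
    using TU by (auto simp: c'_def d'_def intro: sum.mono_neutral_cong_left)
  then have "(\<lambda>x. f x + g x) = (\<lambda>x. \<Sum>e\<in>T \<union> U. (c' e + d' e) *\<^sub>R e x)"
    by (simp add: f g scaleR_add_left sum.distrib)
  with TU show ?thesis
    by (intro fspanI[of "T \<union> U"]) auto
qed

lemma fspan_minimal:
  assumes "S \<subseteq> fspan T"
  shows "fspan S \<subseteq> fspan T"
proof
  fix f assume "f \<in> fspan S"
  then obtain U c where "finite U" "U \<subseteq> S" and f: "f = (\<lambda>x. \<Sum>e\<in>U. c e *\<^sub>R e x)"
    unfolding fspan_def by blast
  then show "f \<in> fspan T"
  proof (induction U arbitrary: f rule: finite_induct)
    case (insert e U)
    with assms show ?case
      by (simp add: fspan_add fspan_scaleR subset_iff)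
  qed (simp add: fspan_zero)
qed

lemma fspan_mono: "S \<subseteq> T \<Longrightarrow> fspan S \<subseteq> fspan T"
  by (meson fspan_minimal fspan_superset subset_iff)

lemma trig_poly_in_fspan:
  "\<forall>(k, A, B)\<in>set L. mode k A B \<in> fspan S \<Longrightarrow> trig_poly L \<in> fspan S"
proof (induction L)
  case Nil
  then show ?case
    using fspan_zero by (simp add: trig_poly_def)
next
  case (Cons w L)
  then show ?case
    by (cases w) (auto simp: trig_poly_def intro!: fspan_add)
qed

lemma Fk_nonzero: "k \<noteq> 0 \<Longrightarrow> Fk k = {mode k A B | A B. A \<bullet> kr k = 0 \<and> B \<bullet> kr k = 0}"
  by (simp add: Fk_def mode_def)

lemma mode_in_Fk: "k \<noteq> 0 \<Longrightarrow> A \<bullet> kr k = 0 \<Longrightarrow> B \<bullet> kr k = 0 \<Longrightarrow> mode k A B \<in> Fk k"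
  by (auto simp: Fk_nonzero)

lemma mode_leray_amp_in_Fk: "mode k (leray_amp k A) (leray_amp k B) \<in> Fk k"
proof (cases "k = 0")
  case True
  then show ?thesis
    by (simp add: Fk_def mode_def leray_amp_def)
qed (intro mode_in_Fk leray_amp_orthogonal)

lemma mode_uminus: "mode (- k) A B = mode k A (- B)"
  by (simp add: fun_eq_iff mode_def kr_uminus)

lemma Fk_uminus: "Fk (- k) = Fk k"
proof (cases "k = 0")
  case False
  have "mode k A B \<in> Fk (- k)" if "A \<bullet> kr k = 0" "B \<bullet> kr k = 0" for A B
    using mode_in_Fk[of "- k" A "- B"] that False by (simp add: mode_uminus kr_uminus)
  moreover have "mode (- k) A B \<in> Fk k" if "A \<bullet> kr (- k) = 0" "B \<bullet> kr (- k) = 0" for A B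
    using mode_in_Fk[of k A "- B"] that False by (simp add: mode_uminus kr_uminus)
  ultimately show ?thesis
    using False by (auto simp: Fk_nonzero[of k] Fk_nonzero[of "- k"])
qed simp

lemma Bop_mode:
  "Bop (mode j A B) (mode k C D) = trig_poly (map leray_wave (interaction (j, A, B) (k, C, D)))"
  using Bop_trig_poly[of "[(j, A, B)]" "[(k, C, D)]"] by (simp add: trig_poly_single advection_def)

lemma Bop_Fk_self_eq_0:
  assumes "k \<noteq> 0" "e \<in> Fk k" "e' \<in> Fk k"
  shows "Bop e e' = (\<lambda>x. 0)"
proof -
  obtain A B C D where e: "e = mode k A B" "e' = mode k C D"
    and "A \<bullet> kr k = 0" "B \<bullet> kr k = 0" "C \<bullet> kr k = 0" "D \<bullet> kr k = 0"
    using assms by (auto simp: Fk_nonzero)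
  then show ?thesis
    unfolding e Bop_mode
    by (simp add: interaction_def leray_wave_def leray_amp_def inner_commute mode_def fun_eq_iff)
qed

lemma Bop_Fk_in_fspan:
  assumes "j \<noteq> 0" "k \<noteq> 0" "e \<in> Fk j" "e' \<in> Fk k"
  shows "Bop e e' \<in> fspan (Fk (j - k) \<union> Fk (j + k))"
proof -
  obtain A B C D where e: "e = mode j A B" "e' = mode k C D"
    using assms by (auto simp: Fk_nonzero)
  show ?thesis
    unfolding e Bop_mode
    by (rule trig_poly_in_fspan)
      (auto simp: interaction_def leray_wave_def intro: fspan_superset mode_leray_amp_in_Fk)
qed

lemma fspan_Bop_Fk_subset:
  assumes "j \<noteq> 0" "k \<noteq> 0"
  shows "fspan {Bop e e' | e e'. e \<in> Fk j \<and> e' \<in> Fk k} \<subseteq> fspan (Fk (j - k) \<union> Fk (j + k))"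
  using Bop_Fk_in_fspan[OF assms] by (intro fspan_minimal) blast

section \<open>Spanning \<open>F\<^sub>j\<^sub>+\<^sub>k\<close>\<close>

definition plus_amp :: "real^3 \<Rightarrow> real^3 \<Rightarrow> real^3 \<Rightarrow> real^3 \<Rightarrow> real^3" where
  "plus_amp J K a b = (a \<bullet> K) *\<^sub>R b + (b \<bullet> J) *\<^sub>R a"

text \<open>In these combinations the \<open>j - k\<close> modes cancel.\<close>

lemma Bop_mode_pair_cos:
  "(\<lambda>x. Bop (mode j a 0) (mode k 0 b) x + Bop (mode j 0 a) (mode k b 0) x)
     = mode (j + k) (leray_amp (j + k) (plus_amp (kr j) (kr k) a b)) 0"
  unfolding Bop_mode
  by (simp add: fun_eq_iff interaction_def leray_wave_def leray_amp_add leray_amp_diff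
      leray_amp_scaleR leray_amp_uminus leray_amp_zero plus_amp_def mode_def vec_eq_iff field_simps)

lemma Bop_mode_pair_sin:
  "(\<lambda>x. Bop (mode j 0 a) (mode k 0 b) x + Bop (mode j (- a) 0) (mode k b 0) x)
     = mode (j + k) 0 (leray_amp (j + k) (plus_amp (kr j) (kr k) a b))"
  unfolding Bop_mode
  by (simp add: fun_eq_iff interaction_def leray_wave_def leray_amp_add leray_amp_diff
      leray_amp_scaleR leray_amp_uminus leray_amp_zero plus_amp_def mode_def vec_eq_iff field_simps)

lemma modes_plus_amp_in_fspan_Bop:
  assumes "j \<noteq> 0" "k \<noteq> 0" "a \<bullet> kr j = 0" "b \<bullet> kr k = 0"
  defines "S \<equiv> {Bop e e' | e e'. e \<in> Fk j \<and> e' \<in> Fk k}"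
  shows "mode (j + k) (leray_amp (j + k) (plus_amp (kr j) (kr k) a b)) 0 \<in> fspan S"
    and "mode (j + k) 0 (leray_amp (j + k) (plus_amp (kr j) (kr k) a b)) \<in> fspan S"
proof -
  have "mode j a 0 \<in> Fk j" "mode j 0 a \<in> Fk j" "mode j (- a) 0 \<in> Fk j"
    "mode k 0 b \<in> Fk k" "mode k b 0 \<in> Fk k"
    using assms by (auto intro!: mode_in_Fk)
  then show "mode (j + k) (leray_amp (j + k) (plus_amp (kr j) (kr k) a b)) 0 \<in> fspan S"
    and "mode (j + k) 0 (leray_amp (j + k) (plus_amp (kr j) (kr k) a b)) \<in> fspan S"
    unfolding Bop_mode_pair_cos[symmetric] Bop_mode_pair_sin[symmetric] S_def
    by (intro fspan_add fspan_superset; blast)+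
qed

lemma Fk_subset_fspan_if_spanning_pair:
  assumes "k \<noteq> 0"
    and span: "\<And>V. V \<bullet> kr k = 0 \<Longrightarrow> \<exists>a b. V = a *\<^sub>R u + b *\<^sub>R v"
    and "mode k u 0 \<in> fspan S" "mode k 0 u \<in> fspan S" "mode k v 0 \<in> fspan S" "mode k 0 v \<in> fspan S"
  shows "Fk k \<subseteq> fspan S"
proof
  fix e assume "e \<in> Fk k"
  then obtain V W where e: "e = mode k V W" and "V \<bullet> kr k = 0" "W \<bullet> kr k = 0"
    using assms(1) by (auto simp: Fk_nonzero)
  then obtain a b c d where "V = a *\<^sub>R u + b *\<^sub>R v" "W = c *\<^sub>R u + d *\<^sub>R v"
    using span by metis
  then have "e = (\<lambda>x. (a *\<^sub>R mode k u 0 x + b *\<^sub>R mode k v 0 x)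
      + (c *\<^sub>R mode k 0 u x + d *\<^sub>R mode k 0 v x))"
    by (simp add: e fun_eq_iff mode_def algebra_simps)
  also have "\<dots> \<in> fspan S"
    using assms(3-6) by (intro fspan_add fspan_scaleR)
  finally show "e \<in> fspan S" .
qed

lemma orthogonal_pair_spans_orthogonal_complement:
  fixes m u v V :: "'a::euclidean_space"
  assumes dim: "DIM('a) = 3" and nz: "m \<noteq> 0" "u \<noteq> 0" "v \<noteq> 0"
    and orth: "m \<bullet> u = 0" "m \<bullet> v = 0" "u \<bullet> v = 0" and V: "V \<bullet> m = 0"
  shows "V = (V \<bullet> u / (u \<bullet> u)) *\<^sub>R u + (V \<bullet> v / (v \<bullet> v)) *\<^sub>R v"
proof -
  define R where "R = V - ((V \<bullet> u / (u \<bullet> u)) *\<^sub>R u + (V \<bullet> v / (v \<bullet> v)) *\<^sub>R v)"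
  have "pairwise orthogonal {m, u, v}"
    using orth by (auto simp: pairwise_def orthogonal_def inner_commute)
  then have "independent {m, u, v}"
    using nz by (intro pairwise_orthogonal_independent) auto
  moreover have "m \<noteq> u" "m \<noteq> v" "u \<noteq> v"
    using nz orth by auto
  then have "card {m, u, v} = 3"
    by simp
  ultimately have "R \<in> span {m, u, v}"
    using card_ge_dim_independent[of "{m, u, v}" UNIV] dim by auto
  moreover have "orthogonal R y" if "y \<in> {m, u, v}" for y
    using that V orth nz
    by (auto simp: R_def orthogonal_def inner_diff_right inner_add_right inner_commute)
  ultimately have "orthogonal R R"
    using orthogonal_to_span by blast
  then have "R = 0"
    by (simp add: orthogonal_def)
  then show ?thesis
    by (simp add: R_def)
qed

unbundle cross3_syntax

lemma cross_cross_expand: "x \<times> (y \<times> z) = (x \<bullet> z) *\<^sub>R y - (x \<bullet> y) *\<^sub>R z"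
  unfolding vec_eq_iff forall_3 by (simp add: cross3_simps)

lemma cross_ne_0_if_independent:
  fixes J K :: "real^3"
  assumes "\<forall>a b. a *\<^sub>R J + b *\<^sub>R K = 0 \<longrightarrow> a = 0 \<and> b = 0"
  shows "J \<times> K \<noteq> 0"
proof
  assume "J \<times> K = 0"
  moreover have "J \<noteq> 0"
    using assms[rule_format, of 1 0] by auto
  ultimately obtain c where "K = c *\<^sub>R J"
    by (auto simp: cross_eq_0 collinear_lemma)
  then show False
    using assms[rule_format, of c "-1"] by simp
qed

lemma plus_amp_cross_normal:
  "plus_amp J K (J \<times> K) (K \<times> (J \<times> K)) = ((J \<times> K) \<bullet> (J \<times> K)) *\<^sub>R (J \<times> K)"
  by (simp add: plus_amp_def dot_cross_self cross_cross_expand dot_cross inner_diff_left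
      inner_commute algebra_simps)

lemma plus_amp_cross_inplane:
  "plus_amp J K (J \<times> (J \<times> K)) (K \<times> (J \<times> K))
     = ((J \<times> K) \<bullet> (J \<times> K)) *\<^sub>R ((J - K) \<times> (J \<times> K))"
  by (simp add: plus_amp_def cross_cross_expand dot_cross inner_diff_left inner_diff_right
      inner_commute algebra_simps)

text \<open>With \<open>n = j \<times> k\<close>, the pairs \<open>(n, k \<times> n)\<close> and \<open>(j \<times> n, k \<times> n)\<close> produce the amplitudes
  \<open>|n|\<^sup>2 n\<close> and the projection of \<open>|n|\<^sup>2 (j - k) \<times> n\<close> onto the plane orthogonal to \<open>j + k\<close>;
  the latter is orthogonal to \<open>n\<close> and its component along \<open>(j + k) \<times> n\<close> is
  \<open>|n|\<^sup>4 (|j|\<^sup>2 - |k|\<^sup>2) \<noteq> 0\<close>.\<close>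

lemma plus_amps_span_orthogonal_complement:
  assumes ind: "\<forall>a b::real. a *\<^sub>R kr j + b *\<^sub>R kr k = 0 \<longrightarrow> a = 0 \<and> b = 0"
    and nrm: "norm (kr j) \<noteq> norm (kr k)"
    and V: "V \<bullet> kr (j + k) = 0"
  defines "n \<equiv> kr j \<times> kr k"
  shows "\<exists>a b. V = a *\<^sub>R leray_amp (j + k) (plus_amp (kr j) (kr k) n (kr k \<times> n))
                 + b *\<^sub>R leray_amp (j + k) (plus_amp (kr j) (kr k) (kr j \<times> n) (kr k \<times> n))"
proof -
  define J K N where "J = kr j" and "K = kr k" and "N = n \<bullet> n"
  have jk: "j + k \<noteq> 0"
    using ind[rule_format, of 1 1] kr_add[of j k] by auto
  have "n \<noteq> 0"
    using cross_ne_0_if_independent[OF ind] by (simp add: n_def)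
  then have N: "N \<noteq> 0"
    by (simp add: N_def)
  have n_orth: "n \<bullet> kr (j + k) = 0"
    by (simp add: n_def kr_add inner_add_right dot_cross_self)
  define u v where "u = leray_amp (j + k) (plus_amp J K n (K \<times> n))"
    and "v = leray_amp (j + k) (plus_amp J K (J \<times> n) (K \<times> n))"
  have u: "u = N *\<^sub>R n"
    unfolding u_def n_def N_def J_def K_def plus_amp_cross_normal using jk n_orth
    by (simp add: leray_amp_id n_def)
  have "v \<bullet> n = 0"
    unfolding v_def using jk n_orth inner_leray_amp[OF jk, of n]
    by (simp add: inner_commute n_def J_def K_def plus_amp_cross_inplane dot_cross_self)
  moreover have "v \<bullet> ((J + K) \<times> n) = N * N * (J \<bullet> J - K \<bullet> K)"
  proof -
    have "kr (j + k) \<bullet> ((J + K) \<times> n) = 0"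
      by (simp add: J_def K_def kr_add dot_cross_self)
    then have "v \<bullet> ((J + K) \<times> n) = (N *\<^sub>R ((J - K) \<times> n)) \<bullet> ((J + K) \<times> n)"
      unfolding v_def n_def N_def J_def K_def plus_amp_cross_inplane by (rule inner_leray_amp[OF jk])
    also have "\<dots> = N * N * (J \<bullet> J - K \<bullet> K)"
      by (simp add: dot_cross dot_cross_self N_def n_def J_def K_def inner_diff_left inner_add_right
          inner_commute algebra_simps)
    finally show ?thesis .
  qed
  moreover have "J \<bullet> J \<noteq> K \<bullet> K"
    using nrm by (simp add: J_def K_def norm_eq_sqrt_inner)
  ultimately have "v \<noteq> 0" "u \<bullet> v = 0"
    using N by (auto simp: u inner_commute)
  moreover have "u \<noteq> 0" "kr (j + k) \<bullet> u = 0" "kr (j + k) \<bullet> v = 0"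
    using N \<open>n \<noteq> 0\<close> n_orth leray_amp_orthogonal by (auto simp: u v_def inner_commute)
  ultimately show ?thesis
    using orthogonal_pair_spans_orthogonal_complement[of "kr (j + k)" u v V] jk V
    by (auto simp: u_def v_def J_def K_def)
qed

lemma Fk_plus_subset_fspan_Bop:
  assumes ind: "\<forall>a b::real. a *\<^sub>R kr j + b *\<^sub>R kr k = 0 \<longrightarrow> a = 0 \<and> b = 0"
    and nrm: "norm (kr j) \<noteq> norm (kr k)"
  shows "Fk (j + k) \<subseteq> fspan {Bop e e' | e e'. e \<in> Fk j \<and> e' \<in> Fk k}"
proof -
  have nz: "j \<noteq> 0" "k \<noteq> 0" "j + k \<noteq> 0"
    using ind[rule_format, of 1 0] ind[rule_format, of 0 1] ind[rule_format, of 1 1] kr_add[of j k]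
    by auto
  define n where "n = kr j \<times> kr k"
  have "n \<bullet> kr j = 0" "(kr j \<times> n) \<bullet> kr j = 0" "(kr k \<times> n) \<bullet> kr k = 0"
    by (simp_all add: n_def dot_cross_self)
  then show ?thesis
    using modes_plus_amp_in_fspan_Bop[OF nz(1,2)] plus_amps_span_orthogonal_complement[OF ind nrm]
    by (intro Fk_subset_fspan_if_spanning_pair[OF nz(3),
          where u = "leray_amp (j + k) (plus_amp (kr j) (kr k) n (kr k \<times> n))"
            and v = "leray_amp (j + k) (plus_amp (kr j) (kr k) (kr j \<times> n) (kr k \<times> n))"])
      (auto simp: n_def)
qed

lemma fspan_Bop_Fk_eq:
  assumes j: "j \<noteq> 0" and k: "k \<noteq> 0"
    and ind: "\<forall>a b::real. a *\<^sub>R kr j + b *\<^sub>R kr k = 0 \<longrightarrow> a = 0 \<and> b = 0"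
    and nrm: "norm (kr j) \<noteq> norm (kr k)"
  shows "fspan {Bop e e' | e e'. e \<in> Fk j \<and> e' \<in> Fk k} = fspan (Fk (j - k) \<union> Fk (j + k))"
proof
  show "fspan {Bop e e' | e e'. e \<in> Fk j \<and> e' \<in> Fk k} \<subseteq> fspan (Fk (j - k) \<union> Fk (j + k))"
    by (rule fspan_Bop_Fk_subset[OF j k])
  have ind': "\<forall>a b::real. a *\<^sub>R kr j + b *\<^sub>R kr (- k) = 0 \<longrightarrow> a = 0 \<and> b = 0"
  proof (intro allI impI)
    fix a b :: real
    assume "a *\<^sub>R kr j + b *\<^sub>R kr (- k) = 0"
    then have "a *\<^sub>R kr j + (- b) *\<^sub>R kr k = 0"
      by (simp add: kr_uminus)
    then show "a = 0 \<and> b = 0"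
      using ind[rule_format, of a "- b"] by simp
  qed
  have "norm (kr j) \<noteq> norm (kr (- k))"
    using nrm by (simp add: kr_uminus)
  from Fk_plus_subset_fspan_Bop[OF ind' this(1)]
  have "Fk (j - k) \<subseteq> fspan {Bop e e' | e e'. e \<in> Fk j \<and> e' \<in> Fk k}"
    by (simp add: Fk_uminus)
  with Fk_plus_subset_fspan_Bop[OF ind nrm]
  show "fspan (Fk (j - k) \<union> Fk (j + k)) \<subseteq> fspan {Bop e e' | e e'. e \<in> Fk j \<and> e' \<in> Fk k}"
    by (intro fspan_minimal) simp
qed

section \<open>Second-order interactions\<close>

lemma Bop_trig_poly_add_left:
  "Bop (\<lambda>x. trig_poly L1 x + trig_poly L2 x) (trig_poly L)
     = (\<lambda>x. Bop (trig_poly L1) (trig_poly L) x + Bop (trig_poly L2) (trig_poly L) x)"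
proof -
  have sum: "(\<lambda>x. trig_poly L1 x + trig_poly L2 x) = trig_poly (L1 @ L2)"
    by (simp add: fun_eq_iff)
  have "advection (L1 @ L2) L = advection L1 L @ advection L2 L"
    by (simp add: advection_def)
  then show ?thesis
    unfolding sum Bop_trig_poly by (simp add: fun_eq_iff)
qed

lemma Bop_Bop_mode_add_left:
  "Bop (\<lambda>x. Bop (mode j A B) (mode k C D) x + Bop (mode j' A' B') (mode k' C' D') x) (mode l E G)
     = (\<lambda>x. Bop (Bop (mode j A B) (mode k C D)) (mode l E G) x
          + Bop (Bop (mode j' A' B') (mode k' C' D')) (mode l E G) x)"
  unfolding Bop_mode[of j] Bop_mode[of j'] trig_poly_single[of l, symmetric]
  by (rule Bop_trig_poly_add_left)

lemma modes_plus_amp2_in_fspan_Bop_Bop: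
  assumes "j \<noteq> 0" "k \<noteq> 0" "l \<noteq> 0" "a \<bullet> kr j = 0" "b \<bullet> kr k = 0" "c \<bullet> kr l = 0"
  defines "a' \<equiv> leray_amp (j + k) (plus_amp (kr j) (kr k) a b)"
    and "S \<equiv> {Bop (Bop e e') e'' | e e' e''. e \<in> Fk j \<and> e' \<in> Fk k \<and> e'' \<in> Fk l}"
  shows "mode (j + k + l) (leray_amp (j + k + l) (plus_amp (kr (j + k)) (kr l) a' c)) 0 \<in> fspan S"
    and "mode (j + k + l) 0 (leray_amp (j + k + l) (plus_amp (kr (j + k)) (kr l) a' c)) \<in> fspan S"
proof -
  have "leray_amp (j + k) (plus_amp (kr j) (kr k) (- a) b) = - a'"
    by (simp add: a'_def plus_amp_def leray_amp_add leray_amp_diff leray_amp_scaleR leray_amp_uminus)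
  then have first:
    "mode (j + k) a' 0 = (\<lambda>x. Bop (mode j a 0) (mode k 0 b) x + Bop (mode j 0 a) (mode k b 0) x)"
    "mode (j + k) 0 a' = (\<lambda>x. Bop (mode j 0 a) (mode k 0 b) x + Bop (mode j (- a) 0) (mode k b 0) x)"
    "mode (j + k) (- a') 0 = (\<lambda>x. Bop (mode j (- a) 0) (mode k 0 b) x + Bop (mode j 0 (- a)) (mode k b 0) x)"
    by (simp_all only: a'_def Bop_mode_pair_cos Bop_mode_pair_sin)
  have "mode j a 0 \<in> Fk j" "mode j 0 a \<in> Fk j" "mode j (- a) 0 \<in> Fk j" "mode j 0 (- a) \<in> Fk j"
    "mode k 0 b \<in> Fk k" "mode k b 0 \<in> Fk k" "mode l 0 c \<in> Fk l" "mode l c 0 \<in> Fk l"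
    using assms by (auto intro!: mode_in_Fk)
  then show "mode (j + k + l) (leray_amp (j + k + l) (plus_amp (kr (j + k)) (kr l) a' c)) 0 \<in> fspan S"
    and "mode (j + k + l) 0 (leray_amp (j + k + l) (plus_amp (kr (j + k)) (kr l) a' c)) \<in> fspan S"
    unfolding Bop_mode_pair_cos[symmetric] Bop_mode_pair_sin[symmetric] first Bop_Bop_mode_add_left S_def
    by (intro fspan_add fspan_superset; blast)+
qed

lemma kr_vector: "kr (vector [a, b, c]) = vector [of_int a, of_int b, of_int c]"
  by (simp add: kr_def vec_eq_iff forall_3)

text \<open>Route \<open>(1,0,0) + (0,1,0) \<rightarrow> (1,1,0)\<close>, then \<open>(1,1,0) + (0,0,1) \<rightarrow> (1,1,1)\<close>: the amplitude
  \<open>(0,0,1)\<close> at \<open>(1,1,0)\<close> combined with \<open>(1,0,0)\<close> or \<open>(0,1,0)\<close> at \<open>(0,0,1)\<close> yields two independent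
  amplitudes orthogonal to \<open>(1,1,1)\<close>.\<close>

lemma Fk_111_subset_fspan_Bop_Bop:
  defines "U \<equiv> Fk (vector [1,0,0]) \<union> Fk (vector [0,1,0]) \<union> Fk (vector [0,0,1])"
  shows "Fk (vector [1,1,1]) \<subseteq> fspan {Bop (Bop e e') e'' | e e' e''. e \<in> U \<and> e' \<in> U \<and> e'' \<in> U}"
proof -
  define e1 e2 e3 :: "int^3" where "e1 = vector [1,0,0]" and "e2 = vector [0,1,0]" and "e3 = vector [0,0,1]"
  define a1 a2 a3 :: "real^3" where "a1 = vector [1,0,0]" and "a2 = vector [0,1,0]" and "a3 = vector [0,0,1]"
  define S where "S = {Bop (Bop e e') e'' | e e' e''. e \<in> Fk e1 \<and> e' \<in> Fk e2 \<and> e'' \<in> Fk e3}"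
  define v where "v c = leray_amp (e1 + e2 + e3) (plus_amp (kr (e1 + e2)) (kr e3) a3 c)" for c
  note vec3_simps = e1_def e2_def e3_def a1_def a2_def a3_def kr_add kr_vector vec_eq_iff forall_3
    inner_vec_def sum_3
  have nz: "e1 \<noteq> 0" "e2 \<noteq> 0" "e3 \<noteq> 0" "e1 + e2 \<noteq> 0" "e1 + e2 + e3 \<noteq> 0"
    and sum: "e1 + e2 + e3 = vector [1,1,1]"
    by (simp_all add: vec3_simps)
  have a3: "leray_amp (e1 + e2) (plus_amp (kr e1) (kr e2) a3 a1) = a3"
    using nz by (simp add: leray_amp_def plus_amp_def vec3_simps)
  have orth: "a3 \<bullet> kr e1 = 0" "a1 \<bullet> kr e2 = 0" "a1 \<bullet> kr e3 = 0" "a2 \<bullet> kr e3 = 0"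
    by (simp_all add: vec3_simps)
  have "mode (e1 + e2 + e3) (v c) 0 \<in> fspan S \<and> mode (e1 + e2 + e3) 0 (v c) \<in> fspan S"
    if "c \<bullet> kr e3 = 0" for c
    using modes_plus_amp2_in_fspan_Bop_Bop[OF nz(1-3) orth(1,2) that, unfolded a3]
    by (simp add: v_def S_def)
  note modes = this[OF orth(3)] this[OF orth(4)]
  have "\<exists>\<alpha> \<beta>. V = \<alpha> *\<^sub>R v a1 + \<beta> *\<^sub>R v a2" if "V \<bullet> kr (e1 + e2 + e3) = 0" for V
  proof -
    have v: "v a1 = vector [1/3, -2/3, 1/3]" "v a2 = vector [-2/3, 1/3, 1/3]"
      using nz by (simp_all add: v_def leray_amp_def plus_amp_def vec3_simps)
    have "V = (2 * V$3 + V$1) *\<^sub>R v a1 + (V$3 - V$1) *\<^sub>R v a2"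
      using that unfolding v by (simp add: sum vec3_simps field_simps)
    then show ?thesis
      by blast
  qed
  then have "Fk (e1 + e2 + e3) \<subseteq> fspan S"
    using nz(5) modes by (intro Fk_subset_fspan_if_spanning_pair) auto
  also have "fspan S \<subseteq> fspan {Bop (Bop e e') e'' | e e' e''. e \<in> U \<and> e' \<in> U \<and> e'' \<in> U}"
    by (rule fspan_mono) (auto simp: S_def U_def e1_def e2_def e3_def)
  finally show ?thesis
    by (simp only: sum)
qed

theorem lemma5p21:
  shows "((\<forall>k::int^3. k \<noteq> 0 \<longrightarrow> (\<forall>e\<in>Fk k. \<forall>e'\<in>Fk k. Bop e e' = (\<lambda>x. 0)))
    \<and> (\<forall>j k::int^3. j \<noteq> 0 \<longrightarrow> k \<noteq> 0 \<longrightarrow>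
           fspan {Bop e e' | e e'. e \<in> Fk j \<and> e' \<in> Fk k} \<subseteq> fspan (Fk (j - k) \<union> Fk (j + k))
         \<and> ((\<forall>a b::real. a *\<^sub>R kr j + b *\<^sub>R kr k = 0 \<longrightarrow> a = 0 \<and> b = 0)
              \<and> norm (kr j) \<noteq> norm (kr k)
            \<longrightarrow> fspan {Bop e e' | e e'. e \<in> Fk j \<and> e' \<in> Fk k} = fspan (Fk (j - k) \<union> Fk (j + k))))
    \<and> (Fk (vector [1, 1, 1]) \<subseteq>
           fspan {Bop (Bop e e') e'' | e e' e''.
                    e \<in> Fk (vector [1,0,0]) \<union> Fk (vector [0,1,0]) \<union> Fk (vector [0,0,1])
                  \<and> e' \<in> Fk (vector [1,0,0]) \<union> Fk (vector [0,1,0]) \<union> Fk (vector [0,0,1])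
                  \<and> e'' \<in> Fk (vector [1,0,0]) \<union> Fk (vector [0,1,0]) \<union> Fk (vector [0,0,1])}))"
  using Bop_Fk_self_eq_0 fspan_Bop_Fk_subset fspan_Bop_Fk_eq Fk_111_subset_fspan_Bop_Bop
  by blast

end
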